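(* Assume (MA1), (MA2), (MA3) and (MA4) hold, and let the sequences be generated by Algorithm R2N. If the algorithm generates only finitely many successful iterations, then there is $x^*\in\mathbb{R}^n$ such that $x_k=x^*$ for all sufficiently large $k$, and \[ \liminf_{k\to\infty}\nu_k^{-1/2}\xi_{cp}(x_k,\nu_k^{-1})^{1/2}=0 . \]
   Context: Setting: $f:\mathbb{R}^n\to\mathbb{R}$ continuously differentiable, $h:\mathbb{R}^n\to\mathbb{R}\cup\{+\infty\}$ proper lower semicontinuous; $\partial$ = limiting subdifferential; $\|\cdot\|$ Euclidean norm on vectors, spectral norm on matrices. A function $g$ is prox-bounded if there exist $\nu>0$, $x$ with $\inf_y g(y)+\frac1{2\nu}\|y-x\|^2>-\infty$; its threshold is the supremum of such $\nu$. For each $x$, $B(x)$ is symmetric and $\psi(\cdot;x):\mathbb{R}^n\to\mathbb{R}\cup\{+\infty\}$. $\varphi(s;x)=f(x)+\nabla f(x)^Ts+\tfrac12s^TB(x)s$, $m(s;x,\sigma)=\varphi(s;x)+\tfrac12\sigma\|s\|^2+\psi(s;x)$; $\varphi_{cp}(s;x)=f(x)+\nabla f(x)^Ts$, $m_{cp}(s;x,\nu^{-1})=\varphi_{cp}(s;x)+\tfrac12\nu^{-1}\|s\|^2+\psi(s;x)$, $P_{cp}(x,\nu^{-1})=\operatorname{argmin}_s m_{cp}(s;x,\nu^{-1})$, and for $s_{cp}\in P_{cp}(x,\nu^{-1})$, $\xi_{cp}(x,\nu^{-1})=f(x)+h(x)-(\varphi_{cp}(s_{cp};x)+\psi(s_{cp};x))$.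 (MA1): for every $x$, $\psi(\cdot;x)$ is proper, lsc, prox-bounded with threshold $\lambda_x$, $\psi(0;x)=h(x)$, $\partial\psi(0;x)=\partial h(x)$. (MA2): there is $\lambda\in(0,+\infty]$ with $\lambda_x\ge\lambda$ for all $x$ (convention $1/\infty=0$). (MA3): there is a function $\omega:[0,\infty)\to[0,\infty)$ with $\omega(t)/t\to0$ as $t\downarrow0$ such that $|h(x_k+s_k)-\psi(s_k;x_k)|\le\omega(\|s_k\|)$ for all $k$. (MA4): $\sum_{k\in\mathbb N}1/r_k=+\infty$, where $r_k:=\max_{0\le j\le k}\|B_j\|+1$. Algorithm R2N: constants $0<\theta_1<1<\theta_2$, $0<\eta_1\le\eta_2<1$, $0<\gamma_3\le1<\gamma_1\le\gamma_2$; $x_0$ with $h(x_0)<\infty$, $\sigma_0>0$. For $k=0,1,\dots$: choose symmetric $B_k=B(x_k)$; set $\nu_k=\theta_1/(\|B_k\|+\sigma_k)$; compute $s_{k,cp}\in P_{cp}(x_k,\nu_k^{-1})$ and $\xi_{cp}(x_k,\nu_k^{-1})$ (using $s_{k,cp}$); compute $s_k$ with $m(s_k;x_k,\sigma_k)\le m(s_{k,cp};x_k,\sigma_k)$; if $\|s_k\|>\theta_2\|s_{k,cp}\|$, reset $s_k=s_{k,cp}$; compute $\rho_k=\frac{(f+h)(x_k)-(f+h)(x_k+s_k)}{\varphi(0;x_k)+\psi(0;x_k)-\varphi(s_k;x_k)-\psi(s_k;x_k)}$ (extended arithmetic: $\pm\infty\cdot0=0$, $(\pm\infty)/(\pm\infty)=0$);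 if $\rho_k\ge\eta_1$ set $x_{k+1}=x_k+s_k$, else $x_{k+1}=x_k$; choose $\sigma_{k+1}\in[\gamma_3\sigma_k,\sigma_k]$ if $\rho_k\ge\eta_2$ (very successful), $\sigma_{k+1}\in[\sigma_k,\gamma_1\sigma_k]$ if $\eta_1\le\rho_k<\eta_2$, $\sigma_{k+1}\in[\gamma_1\sigma_k,\gamma_2\sigma_k]$ if $\rho_k<\eta_1$ (unsuccessful). $\mathcal S=\{k:\rho_k\ge\eta_1\}$ (successful iterations), $\mathcal S_k=\{i\in\mathcal S:i\le k\}$, $\mathcal U=\mathbb N\setminus\mathcal S$, $\mathcal U_k=\{i\in\mathcal U:i\le k\}$. *)

theory Defs
  imports "HOL-Analysis.Analysis"
begin

text \<open>Extended-real valued functions on R^n (values in R \<union> {+\<infinity>}) are modelled as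
  functions into ereal; properness excludes the value -\<infinity>.\<close>

definition proper_fun :: "('a \<Rightarrow> ereal) \<Rightarrow> bool" where
  "proper_fun g \<longleftrightarrow> (\<forall>y. g y \<noteq> -\<infinity>) \<and> (\<exists>y. g y \<noteq> \<infinity>)"

definition lsc_fun :: "('a::topological_space \<Rightarrow> ereal) \<Rightarrow> bool" where
  "lsc_fun g \<longleftrightarrow> (\<forall>x. g x \<le> Liminf (at x) g)"

definition prox_bounded :: "('a::real_normed_vector \<Rightarrow> ereal) \<Rightarrow> bool" where
  "prox_bounded g \<longleftrightarrow>
     (\<exists>\<nu>>0. \<exists>x. (INF y. g y + ereal ((norm (y - x))\<^sup>2 / (2 * \<nu>))) > -\<infinity>)"

definition prox_threshold :: "('a::real_normed_vector \<Rightarrow> ereal) \<Rightarrow> ereal" where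
  "prox_threshold g =
     Sup {ereal \<nu> | \<nu>. \<nu> > 0 \<and>
            (\<exists>x. (INF y. g y + ereal ((norm (y - x))\<^sup>2 / (2 * \<nu>))) > -\<infinity>)}"

text \<open>Frechet (regular) subdifferential: v such that
  liminf_{y\<rightarrow>x, y\<noteq>x} (g y - g x - v\<bullet>(y-x)) / |y-x| \<ge> 0, written out.\<close>
definition frechet_subdiff :: "('a::real_inner \<Rightarrow> ereal) \<Rightarrow> 'a \<Rightarrow> 'a set" where
  "frechet_subdiff g x = {v. \<bar>g x\<bar> \<noteq> \<infinity> \<and>
     (\<forall>\<epsilon>>0. \<forall>\<^sub>F y in at x.
        g y \<ge> g x + ereal (v \<bullet> (y - x) - \<epsilon> * norm (y - x)))}"

definition limiting_subdiff :: "('a::real_inner \<Rightarrow> ereal) \<Rightarrow> 'a \<Rightarrow> 'a set" where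
  "limiting_subdiff g x = {v. \<bar>g x\<bar> \<noteq> \<infinity> \<and>
     (\<exists>xs vs. xs \<longlonglongrightarrow> x \<and> (\<lambda>k. g (xs k)) \<longlonglongrightarrow> g x \<and>
        (\<forall>k. vs k \<in> frechet_subdiff g (xs k)) \<and> vs \<longlonglongrightarrow> v)}"

definition spec_norm :: "real^'n^'n \<Rightarrow> real" where
  "spec_norm A = onorm (\<lambda>v. A *v v)"

definition phi_cp :: "(real^'n \<Rightarrow> real) \<Rightarrow> (real^'n \<Rightarrow> real^'n) \<Rightarrow> real^'n \<Rightarrow> real^'n \<Rightarrow> real" where
  "phi_cp f gf x s = f x + gf x \<bullet> s"

definition phi_q :: "(real^'n \<Rightarrow> real) \<Rightarrow> (real^'n \<Rightarrow> real^'n) \<Rightarrow> real^'n^'n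
      \<Rightarrow> real^'n \<Rightarrow> real^'n \<Rightarrow> real" where
  "phi_q f gf Bx x s = f x + gf x \<bullet> s + (1/2) * (s \<bullet> (Bx *v s))"

definition m_model :: "(real^'n \<Rightarrow> real) \<Rightarrow> (real^'n \<Rightarrow> real^'n) \<Rightarrow> real^'n^'n
      \<Rightarrow> (real^'n \<Rightarrow> real^'n \<Rightarrow> ereal) \<Rightarrow> real^'n \<Rightarrow> real \<Rightarrow> real^'n \<Rightarrow> ereal" where
  "m_model f gf Bx \<psi> x \<sigma> s = ereal (phi_q f gf Bx x s + (1/2) * \<sigma> * (norm s)\<^sup>2) + \<psi> x s"

text \<open>m_cp(s; x, \<nu>^{-1}); the argument nuinv is \<nu>^{-1}.\<close>
definition m_cp :: "(real^'n \<Rightarrow> real) \<Rightarrow> (real^'n \<Rightarrow> real^'n)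
      \<Rightarrow> (real^'n \<Rightarrow> real^'n \<Rightarrow> ereal) \<Rightarrow> real^'n \<Rightarrow> real \<Rightarrow> real^'n \<Rightarrow> ereal" where
  "m_cp f gf \<psi> x nuinv s = ereal (phi_cp f gf x s + (1/2) * nuinv * (norm s)\<^sup>2) + \<psi> x s"

definition P_cp :: "(real^'n \<Rightarrow> real) \<Rightarrow> (real^'n \<Rightarrow> real^'n)
      \<Rightarrow> (real^'n \<Rightarrow> real^'n \<Rightarrow> ereal) \<Rightarrow> real^'n \<Rightarrow> real \<Rightarrow> (real^'n) set" where
  "P_cp f gf \<psi> x nuinv = {s. \<forall>t. m_cp f gf \<psi> x nuinv s \<le> m_cp f gf \<psi> x nuinv t}"

text \<open>\<xi>_cp(x, \<nu>^{-1}) computed with the chosen s_cp.\<close>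
definition xi_cp :: "(real^'n \<Rightarrow> real) \<Rightarrow> (real^'n \<Rightarrow> real^'n) \<Rightarrow> (real^'n \<Rightarrow> ereal)
      \<Rightarrow> (real^'n \<Rightarrow> real^'n \<Rightarrow> ereal) \<Rightarrow> real^'n \<Rightarrow> real^'n \<Rightarrow> ereal" where
  "xi_cp f gf h \<psi> x scp = ereal (f x) + h x - (ereal (phi_cp f gf x scp) + \<psi> x scp)"

definition esqrt :: "ereal \<Rightarrow> ereal" where
  "esqrt z = (if z = \<infinity> then \<infinity> else ereal (sqrt (real_of_ereal z)))"

end

theory Submission
  imports Defs
begin

text \<open>Once no iteration succeeds, the iterate freezes at some \<open>x*\<close> and \<open>\<sigma>\<^sub>k\<close> grows
  geometrically, so \<open>\<nu>\<^sub>k \<rightarrow> 0\<close>. Prox-boundedness of \<open>\<psi>(\<cdot>; x*)\<close> then forces the Cauchy step,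
  and with it the trial step \<open>s\<^sub>k\<close>, to zero. The model decrease dominates \<open>(1 - \<theta>\<^sub>1) \<xi>\<^sub>k\<close>,
  while the actual and model decreases differ by \<open>o(\<parallel>s\<^sub>k\<parallel>)\<close> (differentiability of \<open>f\<close> and (MA3)).
  If \<open>\<xi>\<^sub>k \<ge> e\<^sup>2 \<nu>\<^sub>k\<close> held eventually, then \<open>e \<parallel>s\<^sub>k\<parallel> \<le> 2 \<theta>\<^sub>2 \<xi>\<^sub>k\<close>, so this difference would be
  at most \<open>(1 - \<eta>\<^sub>1)\<close> times the model decrease and the iteration would succeed.\<close>

lemma spec_norm_nonneg: "0 \<le> spec_norm A"
  unfolding spec_norm_def by (rule onorm_pos_le[OF matrix_vector_mul_bounded_linear])

lemma abs_quadratic_form_le_spec_norm: "\<bar>v \<bullet> (A *v v)\<bar> \<le> spec_norm A * (norm v)\<^sup>2"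
proof -
  have "\<bar>v \<bullet> (A *v v)\<bar> \<le> norm v * norm (A *v v)"
    by (rule Cauchy_Schwarz_ineq2)
  also have "\<dots> \<le> norm v * (spec_norm A * norm v)"
    unfolding spec_norm_def
    by (intro mult_left_mono onorm[OF matrix_vector_mul_bounded_linear]) auto
  finally show ?thesis
    by (simp add: power2_eq_square algebra_simps)
qed

lemma prox_bounded_imp_quadratic_minorant:
  fixes g :: "'a::real_normed_vector \<Rightarrow> ereal"
  assumes "prox_bounded g"
  obtains c \<mu> where "0 < \<mu>" "\<And>y. ereal (c - (norm y)\<^sup>2 / \<mu>) \<le> g y"
proof -
  obtain \<nu> x0 where \<nu>: "0 < \<nu>"
    and bdd: "-\<infinity> < (INF y. g y + ereal ((norm (y - x0))\<^sup>2 / (2 * \<nu>)))"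
    using assms unfolding prox_bounded_def by blast
  obtain c where c_le_inf: "ereal c \<le> (INF y. g y + ereal ((norm (y - x0))\<^sup>2 / (2 * \<nu>)))"
  proof (cases "INF y. g y + ereal ((norm (y - x0))\<^sup>2 / (2 * \<nu>))")
    case (real r)
    with that[of r] show ?thesis by simp
  next
    case PInf
    with that[of 0] show ?thesis by simp
  qed (use bdd in simp)
  have c: "ereal c \<le> g y + ereal ((norm (y - x0))\<^sup>2 / (2 * \<nu>))" for y
    using c_le_inf INF_lower[OF UNIV_I] by (rule order_trans)
  have "ereal ((c - (norm x0)\<^sup>2 / \<nu>) - (norm y)\<^sup>2 / \<nu>) \<le> g y" for y
  proof -
    have "(norm (y - x0))\<^sup>2 \<le> (norm y + norm x0)\<^sup>2"
      by (simp add: norm_triangle_ineq4 power_mono)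
    also have "\<dots> \<le> 2 * (norm y)\<^sup>2 + 2 * (norm x0)\<^sup>2"
      using zero_le_power2[of "norm y - norm x0"] by (simp add: power2_sum power2_diff)
    finally have q: "(norm (y - x0))\<^sup>2 / (2 * \<nu>) \<le> (norm y)\<^sup>2 / \<nu> + (norm x0)\<^sup>2 / \<nu>"
      using \<nu> by (simp add: field_simps)
    show ?thesis
    proof (cases "g y")
      case (real r)
      then have "c \<le> r + (norm (y - x0))\<^sup>2 / (2 * \<nu>)"
        using c[of y] by simp
      with q real show ?thesis
        by simp
    qed (use c[of y] in simp_all)
  qed
  with \<nu> that show ?thesis by blast
qed

lemma filterlim_at_top_if_geometric_growth:
  fixes \<sigma> :: "nat \<Rightarrow> real"
  assumes "1 < \<gamma>" "0 < \<sigma> K" and growth: "\<And>k. K \<le> k \<Longrightarrow> \<gamma> * \<sigma> k \<le> \<sigma> (Suc k)"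
  shows "filterlim \<sigma> at_top sequentially"
proof -
  have lower: "\<gamma> ^ (k - K) * \<sigma> K \<le> \<sigma> k" if "K \<le> k" for k
    using that
  proof (induction k rule: nat_induct_at_least)
    case (Suc k)
    have "\<gamma> ^ (Suc k - K) * \<sigma> K = \<gamma> * (\<gamma> ^ (k - K) * \<sigma> K)"
      using Suc.hyps by (simp add: Suc_diff_le)
    also have "\<dots> \<le> \<gamma> * \<sigma> k"
      using Suc.IH assms(1) by simp
    finally show ?case
      using growth[OF Suc.hyps] by simp
  qed simp
  show ?thesis
    unfolding filterlim_at_top
  proof
    fix Z
    obtain n where n: "Z / \<sigma> K < \<gamma> ^ n"
      using real_arch_pow[OF assms(1)] by blast
    have "Z \<le> \<sigma> k" if "K + n \<le> k" for k
    proof -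
      have "Z \<le> \<gamma> ^ n * \<sigma> K"
        using n assms(2) by (simp add: pos_divide_less_eq)
      also have "\<dots> \<le> \<gamma> ^ (k - K) * \<sigma> K"
        using that assms by (intro mult_right_mono power_increasing) simp_all
      also have "\<dots> \<le> \<sigma> k"
        using lower that by simp
      finally show ?thesis .
    qed
    then show "\<forall>\<^sub>F k in sequentially. Z \<le> \<sigma> k"
      unfolding eventually_sequentially by blast
  qed
qed

lemma less_if_quadratic_growth_bound:
  fixes t \<nu> \<mu> \<epsilon> a b :: real
  assumes "0 \<le> t" "0 < \<nu>" "4 * \<nu> \<le> \<mu>" "0 < \<epsilon>" "\<epsilon> \<le> 1"
    and "8 * \<nu> * (\<bar>a\<bar> + \<bar>b\<bar>) < \<epsilon>\<^sup>2"
    and bound: "t\<^sup>2 / (2 * \<nu>) \<le> a + b * t + t\<^sup>2 / \<mu>"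
  shows "t < \<epsilon>"
proof -
  define W where "W = \<bar>a\<bar> + \<bar>b\<bar>"
  have "0 \<le> W"
    by (simp add: W_def)
  have "t\<^sup>2 / \<mu> \<le> t\<^sup>2 / (4 * \<nu>)"
    using assms(2,3) by (intro divide_left_mono) auto
  moreover have "a + b * t \<le> W * (1 + t)"
  proof -
    have "b * t \<le> \<bar>b\<bar> * t" "0 \<le> \<bar>a\<bar> * t"
      using \<open>0 \<le> t\<close> by (simp_all add: mult_right_mono)
    then show ?thesis
      unfolding W_def by (simp add: algebra_simps)
  qed
  ultimately have "t\<^sup>2 / (4 * \<nu>) \<le> W * (1 + t)"
    using bound by (simp add: field_simps)
  then have growth: "t\<^sup>2 \<le> 4 * \<nu> * W * (1 + t)"
    using \<open>0 < \<nu>\<close> by (simp add: field_simps)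
  have small: "8 * \<nu> * W < \<epsilon>\<^sup>2" "\<epsilon>\<^sup>2 \<le> 1"
    using assms(4-6) by (simp_all add: W_def power_le_one)
  have "t < 1"
  proof (rule ccontr)
    assume "\<not> t < 1"
    then have "4 * \<nu> * W * (1 + t) \<le> 4 * \<nu> * W * (2 * t)"
      using \<open>0 < \<nu>\<close> \<open>0 \<le> W\<close> by (intro mult_left_mono) auto
    with growth have "t * t \<le> (8 * \<nu> * W) * t"
      by (simp add: power2_eq_square algebra_simps)
    then have "t \<le> 8 * \<nu> * W"
      using \<open>\<not> t < 1\<close> by simp
    then show False
      using small \<open>\<not> t < 1\<close> by linarith
  qed
  then have "4 * \<nu> * W * (1 + t) \<le> 4 * \<nu> * W * 2"
    using \<open>0 < \<nu>\<close> \<open>0 \<le> W\<close> by (intro mult_left_mono) auto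
  then have "t\<^sup>2 < \<epsilon>\<^sup>2"
    using growth small by linarith
  then show ?thesis
    by (rule power_less_imp_less_base) (use \<open>0 < \<epsilon>\<close> in simp)
qed

lemma tendsto_zero_if_quadratic_growth_bound:
  fixes t \<nu> :: "nat \<Rightarrow> real"
  assumes t_nonneg: "\<And>k. 0 \<le> t k" and \<nu>_pos: "\<And>k. 0 < \<nu> k" and \<nu>_lim: "\<nu> \<longlonglongrightarrow> 0"
    and "0 < \<mu>"
    and bound: "\<forall>\<^sub>F k in sequentially. (t k)\<^sup>2 / (2 * \<nu> k) \<le> a + b * t k + (t k)\<^sup>2 / \<mu>"
  shows "t \<longlonglongrightarrow> 0"
proof (rule tendstoI)
  fix \<epsilon> :: real
  assume "0 < \<epsilon>"
  define \<epsilon>' where "\<epsilon>' = min \<epsilon> 1"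
  have "0 < \<epsilon>'" "\<epsilon>' \<le> 1"
    using \<open>0 < \<epsilon>\<close> by (simp_all add: \<epsilon>'_def)
  have "\<forall>\<^sub>F k in sequentially. \<nu> k < \<mu> / 4"
    using \<open>0 < \<mu>\<close> by (intro order_tendstoD(2)[OF \<nu>_lim]) simp
  moreover have "\<forall>\<^sub>F k in sequentially. \<nu> k < \<epsilon>'\<^sup>2 / (8 * (\<bar>a\<bar> + \<bar>b\<bar>) + 1)"
    using \<open>0 < \<epsilon>'\<close> by (intro order_tendstoD(2)[OF \<nu>_lim]) (simp add: add_nonneg_pos)
  moreover note bound
  ultimately show "\<forall>\<^sub>F k in sequentially. dist (t k) 0 < \<epsilon>"
  proof eventually_elim
    case (elim k)
    have "\<nu> k * (8 * (\<bar>a\<bar> + \<bar>b\<bar>) + 1) < \<epsilon>'\<^sup>2"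
      using elim(2) by (simp add: pos_less_divide_eq add_nonneg_pos)
    then have "8 * \<nu> k * (\<bar>a\<bar> + \<bar>b\<bar>) < \<epsilon>'\<^sup>2"
      using \<nu>_pos[of k] by (simp add: algebra_simps)
    moreover have "4 * \<nu> k \<le> \<mu>"
      using elim(1) by simp
    ultimately have "t k < \<epsilon>'"
      using \<open>0 < \<epsilon>'\<close> \<open>\<epsilon>' \<le> 1\<close>
      by (intro less_if_quadratic_growth_bound[OF t_nonneg \<nu>_pos _ _ _ _ elim(3)])
    then show ?case
      using t_nonneg[of k] by (simp add: \<epsilon>'_def)
  qed
qed

lemma eventually_linearization_error_le:
  fixes f :: "'a::real_inner \<Rightarrow> real"
  assumes "(f has_derivative (\<lambda>v. g \<bullet> v)) (at a)" "s \<longlonglongrightarrow> 0" "0 < \<delta>"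
  shows "\<forall>\<^sub>F k in sequentially. \<bar>f (a + s k) - f a - g \<bullet> s k\<bar> \<le> \<delta> * norm (s k)"
proof -
  obtain r where "0 < r"
    and r: "\<And>y. norm (y - a) < r \<Longrightarrow> \<bar>f y - f a - g \<bullet> (y - a)\<bar> \<le> \<delta> * norm (y - a)"
    using assms(1,3) unfolding has_derivative_at_alt real_norm_def by blast
  have "\<forall>\<^sub>F k in sequentially. norm (s k) < r"
    using tendstoD[OF assms(2) \<open>0 < r\<close>] by simp
  then show ?thesis
    by eventually_elim (use r[of "a + s _"] in simp)
qed

lemma eventually_le_if_little_o_at_right:
  fixes \<omega> :: "real \<Rightarrow> real" and t :: "nat \<Rightarrow> real"
  assumes "((\<lambda>r. \<omega> r / r) \<longlongrightarrow> 0) (at_right 0)" "t \<longlonglongrightarrow> 0" "0 < \<delta>"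
  shows "\<forall>\<^sub>F k in sequentially. 0 < t k \<longrightarrow> \<omega> (t k) \<le> \<delta> * t k"
proof -
  obtain b where "0 < b" and b: "\<And>r. 0 < r \<Longrightarrow> r < b \<Longrightarrow> \<bar>\<omega> r / r\<bar> < \<delta>"
    using tendstoD[OF assms(1,3)] unfolding eventually_at_right_field by auto
  have "\<forall>\<^sub>F k in sequentially. t k < b"
    using order_tendstoD(2)[OF assms(2) \<open>0 < b\<close>] .
  then show ?thesis
  proof eventually_elim
    case (elim k)
    show ?case
    proof
      assume "0 < t k"
      then have "\<bar>\<omega> (t k) / t k\<bar> < \<delta>"
        using b elim by blast
      then have "\<omega> (t k) / t k < \<delta>"
        by (meson abs_ge_self le_less_trans)
      then show "\<omega> (t k) \<le> \<delta> * t k"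
        using \<open>0 < t k\<close> by (simp add: pos_divide_less_eq)
    qed
  qed
qed

lemma Liminf_eq_0_if_frequently_le:
  fixes T :: "nat \<Rightarrow> real"
  assumes nonneg: "\<And>k. 0 \<le> T k" and small: "\<And>e. 0 < e \<Longrightarrow> \<exists>\<^sub>F k in sequentially. T k \<le> e"
  shows "Liminf sequentially (\<lambda>k. ereal (T k)) = 0"
proof (rule antisym)
  show "Liminf sequentially (\<lambda>k. ereal (T k)) \<le> 0"
  proof (rule ccontr)
    assume "\<not> ?thesis"
    then obtain e :: real where "0 < e" "ereal e < Liminf sequentially (\<lambda>k. ereal (T k))"
      by (metis ereal_dense2 ereal_less(2) linorder_not_le)
    then have "\<forall>\<^sub>F k in sequentially. ereal e < ereal (T k)"
      using le_Liminf_iff[THEN iffD1, OF order_refl] by blast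
    then have "\<forall>\<^sub>F k in sequentially. e < T k"
      by simp
    then show False
      using small[OF \<open>0 < e\<close>] by (simp add: frequently_def not_le)
  qed
  show "0 \<le> Liminf sequentially (\<lambda>k. ereal (T k))"
    by (rule Liminf_bounded) (simp add: nonneg)
qed

locale r2n_iteration =
  fixes f :: "real^'n \<Rightarrow> real" and gf :: "real^'n \<Rightarrow> real^'n"
    and h :: "real^'n \<Rightarrow> ereal" and \<psi> :: "real^'n \<Rightarrow> real^'n \<Rightarrow> ereal"
    and B :: "real^'n \<Rightarrow> real^'n^'n"
    and \<theta>1 \<theta>2 \<eta>1 \<eta>2 \<gamma>1 \<gamma>3 :: real
    and x :: "nat \<Rightarrow> real^'n" and \<sigma> \<nu> :: "nat \<Rightarrow> real"
    and scp st s :: "nat \<Rightarrow> real^'n" and \<rho> :: "nat \<Rightarrow> ereal"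
    and \<omega> :: "real \<Rightarrow> real"
  assumes f_grad: "\<And>y. (f has_derivative (\<lambda>v. gf y \<bullet> v)) (at y)"
    and h_not_minf: "\<And>y. h y \<noteq> -\<infinity>"
    and \<psi>_not_minf: "\<And>y v. \<psi> y v \<noteq> -\<infinity>"
    and \<psi>_prox_bounded: "\<And>y. prox_bounded (\<psi> y)"
    and \<psi>_zero: "\<And>y. \<psi> y 0 = h y"
    and \<omega>_little_o: "((\<lambda>t. \<omega> t / t) \<longlongrightarrow> 0) (at_right 0)"
    and h_\<psi>_close: "\<And>k. \<bar>h (x k + s k) - \<psi> (x k) (s k)\<bar> \<le> ereal (\<omega> (norm (s k)))"
    and params: "0 < \<theta>1" "\<theta>1 < 1" "1 < \<theta>2" "0 < \<eta>1" "\<eta>1 < 1" "0 < \<gamma>3" "1 < \<gamma>1"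
    and init: "h (x 0) < \<infinity>" "0 < \<sigma> 0"
    and \<nu>_def: "\<And>k. \<nu> k = \<theta>1 / (spec_norm (B (x k)) + \<sigma> k)"
    and scp_def: "\<And>k. scp k \<in> P_cp f gf \<psi> (x k) (1 / \<nu> k)"
    and st_def: "\<And>k. m_model f gf (B (x k)) \<psi> (x k) (\<sigma> k) (st k)
                   \<le> m_model f gf (B (x k)) \<psi> (x k) (\<sigma> k) (scp k)"
    and s_def: "\<And>k. s k = (if norm (st k) > \<theta>2 * norm (scp k) then scp k else st k)"
    and \<rho>_def: "\<And>k. \<rho> k =
          (ereal (f (x k)) + h (x k) - (ereal (f (x k + s k)) + h (x k + s k))) /
          (ereal (phi_q f gf (B (x k)) (x k) 0) + \<psi> (x k) 0
             - ereal (phi_q f gf (B (x k)) (x k) (s k)) - \<psi> (x k) (s k))"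
    and x_upd: "\<And>k. x (Suc k) = (if \<rho> k \<ge> ereal \<eta>1 then x k + s k else x k)"
    and \<sigma>_very_successful: "\<And>k. ereal \<eta>2 \<le> \<rho> k \<Longrightarrow> \<gamma>3 * \<sigma> k \<le> \<sigma> (Suc k)"
    and \<sigma>_successful: "\<And>k. ereal \<eta>1 \<le> \<rho> k \<Longrightarrow> \<rho> k < ereal \<eta>2 \<Longrightarrow> \<sigma> k \<le> \<sigma> (Suc k)"
    and \<sigma>_unsuccessful: "\<And>k. \<rho> k < ereal \<eta>1 \<Longrightarrow> \<gamma>1 * \<sigma> k \<le> \<sigma> (Suc k)"
begin

lemma \<sigma>_pos: "0 < \<sigma> k"
proof (induction k)
  case (Suc k)
  consider "ereal \<eta>2 \<le> \<rho> k" | "ereal \<eta>1 \<le> \<rho> k" "\<rho> k < ereal \<eta>2" | "\<rho> k < ereal \<eta>1"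
    by force
  then show ?case
    by cases (use Suc params \<sigma>_very_successful[of k] \<sigma>_successful[of k] \<sigma>_unsuccessful[of k]
        in \<open>smt (verit) mult_pos_pos\<close>)+
qed (use init in simp)

lemma \<nu>_pos: "0 < \<nu> k"
  using \<nu>_def[of k] \<sigma>_pos[of k] spec_norm_nonneg[of "B (x k)"] params by simp

lemma norm_step_le_cauchy_step: "norm (s k) \<le> \<theta>2 * norm (scp k)"
  using s_def[of k] params by (smt (verit) mult_le_cancel_right1 norm_ge_zero)

lemma m_model_step_le_cauchy_step:
  "m_model f gf (B (x k)) \<psi> (x k) (\<sigma> k) (s k) \<le> m_model f gf (B (x k)) \<psi> (x k) (\<sigma> k) (scp k)"
  using s_def[of k] st_def[of k] by simp

lemma m_cp_cauchy_step_le_zero: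
  "m_cp f gf \<psi> (x k) (1 / \<nu> k) (scp k) \<le> m_cp f gf \<psi> (x k) (1 / \<nu> k) 0"
  using scp_def[of k] unfolding P_cp_def by blast

lemma finite_values_if_h_finite:
  assumes "h (x k) \<noteq> \<infinity>"
  shows "\<bar>\<psi> (x k) (scp k)\<bar> \<noteq> \<infinity>" "\<bar>\<psi> (x k) (s k)\<bar> \<noteq> \<infinity>" "\<bar>h (x k + s k)\<bar> \<noteq> \<infinity>"
proof -
  have "m_cp f gf \<psi> (x k) (1 / \<nu> k) 0 < \<infinity>"
    using assms unfolding m_cp_def \<psi>_zero by simp
  then have cp: "\<psi> (x k) (scp k) < \<infinity>"
    using m_cp_cauchy_step_le_zero[of k] unfolding m_cp_def by auto
  then have "m_model f gf (B (x k)) \<psi> (x k) (\<sigma> k) (s k) < \<infinity>"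
    using m_model_step_le_cauchy_step[of k] unfolding m_model_def by auto
  then have step: "\<psi> (x k) (s k) < \<infinity>"
    unfolding m_model_def by auto
  then have "h (x k + s k) \<noteq> \<infinity>"
    using h_\<psi>_close[of k] by auto
  with cp step show "\<bar>\<psi> (x k) (scp k)\<bar> \<noteq> \<infinity>" "\<bar>\<psi> (x k) (s k)\<bar> \<noteq> \<infinity>" "\<bar>h (x k + s k)\<bar> \<noteq> \<infinity>"
    using \<psi>_not_minf h_not_minf by auto
qed

lemma iterate_values_finite:
  "\<bar>h (x k)\<bar> \<noteq> \<infinity>" "\<bar>\<psi> (x k) (scp k)\<bar> \<noteq> \<infinity>" "\<bar>\<psi> (x k) (s k)\<bar> \<noteq> \<infinity>"
  "\<bar>h (x k + s k)\<bar> \<noteq> \<infinity>"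
proof -
  have "h (x k) \<noteq> \<infinity>"
  proof (induction k)
    case (Suc k)
    then show ?case
      using finite_values_if_h_finite(3)[of k] x_upd[of k] by auto
  qed (use init in simp)
  then show "\<bar>h (x k)\<bar> \<noteq> \<infinity>" "\<bar>\<psi> (x k) (scp k)\<bar> \<noteq> \<infinity>" "\<bar>\<psi> (x k) (s k)\<bar> \<noteq> \<infinity>"
      "\<bar>h (x k + s k)\<bar> \<noteq> \<infinity>"
    using h_not_minf finite_values_if_h_finite by auto
qed

text \<open>Real values of \<open>\<xi>\<^sub>c\<^sub>p(x\<^sub>k, \<nu>\<^sub>k\<^sup>-\<^sup>1)\<close> and of the denominator and numerator of \<open>\<rho>\<^sub>k\<close>,
  which are finite by \<open>iterate_values_finite\<close>.\<close>

definition xi :: "nat \<Rightarrow> real" where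
  "xi k = real_of_ereal (h (x k)) - gf (x k) \<bullet> scp k - real_of_ereal (\<psi> (x k) (scp k))"

definition model_decrease :: "nat \<Rightarrow> real" where
  "model_decrease k = real_of_ereal (h (x k)) - gf (x k) \<bullet> s k - (1/2) * (s k \<bullet> (B (x k) *v s k))
     - real_of_ereal (\<psi> (x k) (s k))"

definition actual_decrease :: "nat \<Rightarrow> real" where
  "actual_decrease k = f (x k) + real_of_ereal (h (x k)) - f (x k + s k) - real_of_ereal (h (x k + s k))"

lemma xi_cp_eq: "xi_cp f gf h \<psi> (x k) (scp k) = ereal (xi k)"
  using iterate_values_finite[of k] unfolding xi_cp_def phi_cp_def xi_def
  by (cases "h (x k)"; cases "\<psi> (x k) (scp k)") auto

lemma \<rho>_eq: "model_decrease k \<noteq> 0 \<Longrightarrow> \<rho> k = ereal (actual_decrease k / model_decrease k)"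
  using iterate_values_finite[of k] unfolding \<rho>_def model_decrease_def actual_decrease_def
    phi_q_def \<psi>_zero
  by (cases "h (x k)"; cases "h (x k + s k)"; cases "\<psi> (x k) (s k)") (auto simp: algebra_simps)

lemma cauchy_step_sq_le_xi: "(norm (scp k))\<^sup>2 / (2 * \<nu> k) \<le> xi k"
  using m_cp_cauchy_step_le_zero[of k] iterate_values_finite[of k]
  unfolding m_cp_def phi_cp_def xi_def \<psi>_zero
  by (cases "h (x k)"; cases "\<psi> (x k) (scp k)") auto

lemma xi_nonneg: "0 \<le> xi k"
  by (rule order_trans[OF _ cauchy_step_sq_le_xi]) (simp add: \<nu>_pos less_imp_le)

lemma model_decrease_ge_xi: "(1 - \<theta>1) * xi k \<le> model_decrease k"
proof -
  let ?b = "spec_norm (B (x k))"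
  have "gf (x k) \<bullet> s k + (1/2) * (s k \<bullet> (B (x k) *v s k)) + (1/2) * \<sigma> k * (norm (s k))\<^sup>2
          + real_of_ereal (\<psi> (x k) (s k))
        \<le> gf (x k) \<bullet> scp k + (1/2) * (scp k \<bullet> (B (x k) *v scp k)) + (1/2) * \<sigma> k * (norm (scp k))\<^sup>2
          + real_of_ereal (\<psi> (x k) (scp k))"
    using m_model_step_le_cauchy_step[of k] iterate_values_finite[of k]
    unfolding m_model_def phi_q_def
    by (cases "\<psi> (x k) (s k)"; cases "\<psi> (x k) (scp k)") auto
  moreover have "scp k \<bullet> (B (x k) *v scp k) \<le> ?b * (norm (scp k))\<^sup>2"
    using abs_quadratic_form_le_spec_norm[of "scp k" "B (x k)"] by linarith
  moreover have "0 \<le> \<sigma> k * (norm (s k))\<^sup>2"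
    using \<sigma>_pos[of k] by simp
  ultimately have "xi k - (1/2) * (?b + \<sigma> k) * (norm (scp k))\<^sup>2 \<le> model_decrease k"
    unfolding xi_def model_decrease_def by (simp add: algebra_simps)
  moreover have "(1/2) * (?b + \<sigma> k) * (norm (scp k))\<^sup>2 = \<theta>1 * ((norm (scp k))\<^sup>2 / (2 * \<nu> k))"
    using \<nu>_def[of k] \<nu>_pos[of k] params by (simp add: field_simps)
  moreover have "\<theta>1 * ((norm (scp k))\<^sup>2 / (2 * \<nu> k)) \<le> \<theta>1 * xi k"
    using cauchy_step_sq_le_xi[of k] params by (intro mult_left_mono) auto
  ultimately show ?thesis
    by (simp add: algebra_simps)
qed

lemma norm_step_le_xi:
  assumes "0 < e" "e\<^sup>2 * \<nu> k \<le> xi k"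
  shows "e * norm (s k) \<le> 2 * \<theta>2 * xi k"
proof -
  have cauchy: "(norm (scp k))\<^sup>2 \<le> 2 * \<nu> k * xi k"
    using cauchy_step_sq_le_xi[of k] \<nu>_pos[of k] by (simp add: field_simps)
  have "(norm (s k))\<^sup>2 \<le> (\<theta>2 * norm (scp k))\<^sup>2"
    using norm_step_le_cauchy_step[of k] by (rule power_mono) simp
  also have "\<dots> \<le> \<theta>2\<^sup>2 * (2 * \<nu> k * xi k)"
    unfolding power_mult_distrib using cauchy by (rule mult_left_mono) simp
  finally have "(e * norm (s k))\<^sup>2 \<le> e\<^sup>2 * (\<theta>2\<^sup>2 * (2 * \<nu> k * xi k))"
    unfolding power_mult_distrib by (rule mult_left_mono) simp
  also have "\<dots> = 2 * \<theta>2\<^sup>2 * xi k * (e\<^sup>2 * \<nu> k)"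
    by (simp add: algebra_simps)
  also have "\<dots> \<le> 2 * \<theta>2\<^sup>2 * xi k * xi k"
    using assms(2) xi_nonneg[of k] by (intro mult_left_mono) auto
  also have "\<dots> \<le> (2 * \<theta>2 * xi k)\<^sup>2"
  proof -
    have "(2 * \<theta>2 * xi k)\<^sup>2 = 2 * \<theta>2\<^sup>2 * xi k * xi k + 2 * (\<theta>2 * xi k)\<^sup>2"
      by (simp add: power2_eq_square algebra_simps)
    then show ?thesis
      by simp
  qed
  finally show ?thesis
    by (rule power2_le_imp_le) (use params xi_nonneg[of k] in simp)
qed

lemma successful_if_decreases_close:
  assumes "0 < model_decrease k"
    and "\<bar>actual_decrease k - model_decrease k\<bar> \<le> (1 - \<eta>1) * model_decrease k"
  shows "ereal \<eta>1 \<le> \<rho> k"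
proof -
  have "\<eta>1 * model_decrease k \<le> actual_decrease k"
    using assms(2) by (simp add: algebra_simps abs_le_iff)
  then show ?thesis
    using \<rho>_eq[of k] assms(1) by (simp add: pos_le_divide_eq)
qed

lemma decrease_difference_eq:
  "actual_decrease k - model_decrease k =
     - (f (x k + s k) - f (x k) - gf (x k) \<bullet> s k) + (1/2) * (s k \<bullet> (B (x k) *v s k))
     + (real_of_ereal (\<psi> (x k) (s k)) - real_of_ereal (h (x k + s k)))"
  unfolding actual_decrease_def model_decrease_def by (simp add: algebra_simps)

lemma abs_\<psi>_minus_h_at_step_le:
  "\<bar>real_of_ereal (\<psi> (x k) (s k)) - real_of_ereal (h (x k + s k))\<bar> \<le> \<omega> (norm (s k))"
  using h_\<psi>_close[of k] iterate_values_finite[of k]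
  by (cases "\<psi> (x k) (s k)"; cases "h (x k + s k)") auto

context
  fixes K :: nat
  assumes unsuccessful: "\<And>k. K \<le> k \<Longrightarrow> \<rho> k < ereal \<eta>1"
begin

lemma x_eq_x_K: "K \<le> k \<Longrightarrow> x k = x K"
proof (induction k rule: nat_induct_at_least)
  case (Suc k)
  then show ?case
    using x_upd[of k] unsuccessful[of k] by simp
qed simp

lemma \<nu>_tendsto_0: "\<nu> \<longlonglongrightarrow> 0"
proof (rule tendsto_sandwich[of "\<lambda>_. 0" \<nu> _ "\<lambda>k. \<theta>1 / \<sigma> k"])
  have "filterlim \<sigma> at_top sequentially"
    using params(7) \<sigma>_pos
    by (rule filterlim_at_top_if_geometric_growth) (use \<sigma>_unsuccessful unsuccessful in blast)
  then show "(\<lambda>k. \<theta>1 / \<sigma> k) \<longlonglongrightarrow> 0"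
    by (intro tendsto_divide_0[OF tendsto_const] filterlim_at_top_imp_at_infinity)
  show "\<forall>\<^sub>F k in sequentially. 0 \<le> \<nu> k"
    using \<nu>_pos by (simp add: less_imp_le)
  show "\<forall>\<^sub>F k in sequentially. \<nu> k \<le> \<theta>1 / \<sigma> k"
  proof (rule always_eventually, rule allI)
    fix k
    show "\<nu> k \<le> \<theta>1 / \<sigma> k"
      using \<nu>_def[of k] \<sigma>_pos[of k] spec_norm_nonneg[of "B (x k)"] params(1)
      by (simp add: frac_le)
  qed
qed simp

lemma cauchy_step_tendsto_0: "scp \<longlonglongrightarrow> 0"
proof -
  obtain c \<mu> where "0 < \<mu>" and minorant: "\<And>y. ereal (c - (norm y)\<^sup>2 / \<mu>) \<le> \<psi> (x K) y"
    using prox_bounded_imp_quadratic_minorant[OF \<psi>_prox_bounded] by blast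
  define a where "a = real_of_ereal (h (x K)) - c"
  define b where "b = norm (gf (x K))"
  have "\<forall>\<^sub>F k in sequentially.
      (norm (scp k))\<^sup>2 / (2 * \<nu> k) \<le> a + b * norm (scp k) + (norm (scp k))\<^sup>2 / \<mu>"
    using eventually_ge_at_top[of K]
  proof eventually_elim
    case (elim k)
    have "c - (norm (scp k))\<^sup>2 / \<mu> \<le> real_of_ereal (\<psi> (x K) (scp k))"
      using minorant[of "scp k"] iterate_values_finite(2)[of k] x_eq_x_K[OF elim]
      by (cases "\<psi> (x K) (scp k)") auto
    moreover have "- (b * norm (scp k)) \<le> gf (x K) \<bullet> scp k"
      unfolding b_def by (metis Cauchy_Schwarz_ineq2 abs_le_iff minus_le_iff)
    ultimately show ?case
      using cauchy_step_sq_le_xi[of k] x_eq_x_K[OF elim] unfolding xi_def a_def by simp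
  qed
  then have "(\<lambda>k. norm (scp k)) \<longlonglongrightarrow> 0"
    by (rule tendsto_zero_if_quadratic_growth_bound[OF norm_ge_zero \<nu>_pos \<nu>_tendsto_0 \<open>0 < \<mu>\<close>])
  then show ?thesis
    by (simp add: tendsto_norm_zero_iff)
qed

lemma step_tendsto_0: "s \<longlonglongrightarrow> 0"
proof -
  have lim: "(\<lambda>k. \<theta>2 * norm (scp k)) \<longlonglongrightarrow> 0"
    using tendsto_mult_right_zero[OF tendsto_norm_zero[OF cauchy_step_tendsto_0]] .
  have "(\<lambda>k. norm (s k)) \<longlonglongrightarrow> 0"
    by (rule tendsto_sandwich[OF _ _ tendsto_const lim]) (simp_all add: norm_step_le_cauchy_step)
  then show ?thesis
    by (simp add: tendsto_norm_zero_iff)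
qed

lemma eventually_decrease_difference_le:
  assumes "0 < \<delta>"
  shows "\<forall>\<^sub>F k in sequentially. \<bar>actual_decrease k - model_decrease k\<bar> \<le> \<delta> * norm (s k)"
proof -
  define b where "b = spec_norm (B (x K))"
  have "0 \<le> b"
    unfolding b_def by (rule spec_norm_nonneg)
  then have "b + 1 \<noteq> 0"
    by simp
  have norm_s: "(\<lambda>k. norm (s k)) \<longlonglongrightarrow> 0"
    by (rule tendsto_norm_zero[OF step_tendsto_0])
  have "\<forall>\<^sub>F k in sequentially. \<bar>f (x K + s k) - f (x K) - gf (x K) \<bullet> s k\<bar> \<le> \<delta> / 3 * norm (s k)"
    using assms by (intro eventually_linearization_error_le[OF f_grad step_tendsto_0]) simp
  moreover have "\<forall>\<^sub>F k in sequentially. 0 < norm (s k) \<longrightarrow> \<omega> (norm (s k)) \<le> \<delta> / 3 * norm (s k)"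
    using assms by (intro eventually_le_if_little_o_at_right[OF \<omega>_little_o norm_s]) simp
  moreover have "\<forall>\<^sub>F k in sequentially. norm (s k) < (2 * \<delta> / 3) / (b + 1)"
    using assms \<open>0 \<le> b\<close> by (intro order_tendstoD(2)[OF norm_s]) simp
  moreover note eventually_ge_at_top[of K]
  ultimately show ?thesis
  proof eventually_elim
    case (elim k)
    note x_k = x_eq_x_K[OF elim(4)]
    have "\<bar>s k \<bullet> (B (x K) *v s k)\<bar> \<le> b * norm (s k) * norm (s k)"
      using abs_quadratic_form_le_spec_norm[of "s k" "B (x K)"] unfolding b_def
      by (simp add: power2_eq_square mult.assoc)
    also have "\<dots> \<le> (b + 1) * ((2 * \<delta> / 3) / (b + 1)) * norm (s k)"
      using elim(3) \<open>0 \<le> b\<close> by (intro mult_right_mono mult_mono) simp_all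
    also have "\<dots> = 2 * \<delta> / 3 * norm (s k)"
      using \<open>b + 1 \<noteq> 0\<close> by (simp add: field_simps)
    finally have quadratic: "\<bar>s k \<bullet> (B (x K) *v s k)\<bar> \<le> 2 * \<delta> / 3 * norm (s k)" .
    have model_error:
      "\<bar>real_of_ereal (\<psi> (x k) (s k)) - real_of_ereal (h (x k + s k))\<bar> \<le> \<delta> / 3 * norm (s k)"
    proof (cases "s k = 0")
      case True
      then show ?thesis
        by (simp add: \<psi>_zero)
    next
      case False
      then show ?thesis
        using abs_\<psi>_minus_h_at_step_le[of k] elim(2) by simp
    qed
    show ?case
      using elim(1) quadratic model_error unfolding decrease_difference_eq x_k abs_le_iff
      by linarith
  qed
qed

lemma frequently_xi_le:
  assumes "0 < e"
  shows "\<exists>\<^sub>F k in sequentially. xi k \<le> e\<^sup>2 * \<nu> k"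
proof (rule ccontr)
  define \<delta> where "\<delta> = (1 - \<eta>1) * (1 - \<theta>1) / (2 * \<theta>2) * e"
  have "0 < \<delta>"
    using params assms by (simp add: \<delta>_def)
  assume "\<not> (\<exists>\<^sub>F k in sequentially. xi k \<le> e\<^sup>2 * \<nu> k)"
  then have "\<forall>\<^sub>F k in sequentially. e\<^sup>2 * \<nu> k < xi k"
    by (simp add: not_frequently not_le)
  moreover note eventually_decrease_difference_le[OF \<open>0 < \<delta>\<close>] eventually_ge_at_top[of K]
  ultimately have "\<forall>\<^sub>F k in sequentially. False"
  proof eventually_elim
    case (elim k)
    have "0 < xi k"
      using elim(1) \<nu>_pos[of k] assms by (smt (verit) mult_pos_pos zero_less_power)
    have model_ge: "(1 - \<theta>1) * xi k \<le> model_decrease k"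
      by (rule model_decrease_ge_xi)
    have "\<bar>actual_decrease k - model_decrease k\<bar> \<le> (1 - \<eta>1) * (1 - \<theta>1) / (2 * \<theta>2) * (e * norm (s k))"
      using elim(2) by (simp add: \<delta>_def mult.assoc)
    also have "\<dots> \<le> (1 - \<eta>1) * (1 - \<theta>1) / (2 * \<theta>2) * (2 * \<theta>2 * xi k)"
      using norm_step_le_xi[OF assms less_imp_le[OF elim(1)]] params
      by (intro mult_left_mono) simp_all
    also have "\<dots> = (1 - \<eta>1) * ((1 - \<theta>1) * xi k)"
      using params by simp
    also have "\<dots> \<le> (1 - \<eta>1) * model_decrease k"
      using model_ge params by (intro mult_left_mono) simp_all
    finally have "ereal \<eta>1 \<le> \<rho> k"
    proof (rule successful_if_decreases_close[rotated])
      show "0 < model_decrease k"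
        using model_ge \<open>0 < xi k\<close> params by (smt (verit) mult_pos_pos)
    qed
    then show False
      using unsuccessful[OF elim(3)] by simp
  qed
  then show False
    by simp
qed

lemma Liminf_criticality_measure_eq_0:
  "Liminf sequentially (\<lambda>k. ereal (sqrt (1 / \<nu> k)) * esqrt (xi_cp f gf h \<psi> (x k) (scp k))) = 0"
proof -
  have measure_eq: "ereal (sqrt (1 / \<nu> k)) * esqrt (xi_cp f gf h \<psi> (x k) (scp k))
      = ereal (sqrt (xi k / \<nu> k))" for k
    by (simp add: xi_cp_eq esqrt_def real_sqrt_divide)
  have small: "\<exists>\<^sub>F k in sequentially. sqrt (xi k / \<nu> k) \<le> e" if "0 < e" for e
    using frequently_xi_le[OF that]
  proof (rule frequently_elim1)
    fix k
    assume "xi k \<le> e\<^sup>2 * \<nu> k"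
    then have "xi k / \<nu> k \<le> e\<^sup>2"
      using \<nu>_pos[of k] by (simp add: pos_divide_le_eq)
    then show "sqrt (xi k / \<nu> k) \<le> e"
      using \<open>0 < e\<close> by (simp add: real_le_lsqrt)
  qed
  show ?thesis
    unfolding measure_eq
    by (rule Liminf_eq_0_if_frequently_le[OF _ small]) (simp add: divide_nonneg_pos xi_nonneg \<nu>_pos)
qed

end

end

theorem theorem5p6:
  fixes f :: "real^'n \<Rightarrow> real"
    and gf :: "real^'n \<Rightarrow> real^'n"
    and h :: "real^'n \<Rightarrow> ereal"
    and \<psi> :: "real^'n \<Rightarrow> real^'n \<Rightarrow> ereal"
    and B :: "real^'n \<Rightarrow> real^'n^'n"
    and \<theta>1 \<theta>2 \<eta>1 \<eta>2 \<gamma>1 \<gamma>2 \<gamma>3 :: real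
    and x :: "nat \<Rightarrow> real^'n"
    and \<sigma> \<nu> :: "nat \<Rightarrow> real"
    and scp st s :: "nat \<Rightarrow> real^'n"
    and \<rho> :: "nat \<Rightarrow> ereal"
    and \<omega> :: "real \<Rightarrow> real"
    and lam :: ereal
  assumes f_grad: "\<And>y. (f has_derivative (\<lambda>v. gf y \<bullet> v)) (at y)"
    and f_C1: "continuous_on UNIV gf"
    and h_proper: "proper_fun h" and h_lsc: "lsc_fun h"
    and B_sym: "\<And>y. transpose (B y) = B y"
    (* (MA1) *)
    and MA1: "\<And>y. proper_fun (\<psi> y) \<and> lsc_fun (\<psi> y) \<and> prox_bounded (\<psi> y)
               \<and> \<psi> y 0 = h y \<and> limiting_subdiff (\<psi> y) 0 = limiting_subdiff h y"
    (* (MA2) *)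
    and MA2: "lam > 0" "\<And>y. prox_threshold (\<psi> y) \<ge> lam"
    (* (MA3) *)
    and MA3_omega: "\<And>t. t \<ge> 0 \<Longrightarrow> \<omega> t \<ge> 0"
    and MA3_lim: "((\<lambda>t. \<omega> t / t) \<longlongrightarrow> 0) (at_right 0)"
    and MA3: "\<And>k. \<bar>h (x k + s k) - \<psi> (x k) (s k)\<bar> \<le> ereal (\<omega> (norm (s k)))"
    (* (MA4) *)
    and MA4: "\<not> summable (\<lambda>k. 1 / (Max ((\<lambda>j. spec_norm (B (x j))) ` {..k}) + 1))"
    (* algorithm constants *)
    and params: "0 < \<theta>1" "\<theta>1 < 1" "1 < \<theta>2" "0 < \<eta>1" "\<eta>1 \<le> \<eta>2" "\<eta>2 < 1"
                "0 < \<gamma>3" "\<gamma>3 \<le> 1" "1 < \<gamma>1" "\<gamma>1 \<le> \<gamma>2"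
    and init: "h (x 0) < \<infinity>" "\<sigma> 0 > 0"
    (* the iteration of R2N *)
    and nu_def: "\<And>k. \<nu> k = \<theta>1 / (spec_norm (B (x k)) + \<sigma> k)"
    and scp_def: "\<And>k. scp k \<in> P_cp f gf \<psi> (x k) (1 / \<nu> k)"
    and st_def: "\<And>k. m_model f gf (B (x k)) \<psi> (x k) (\<sigma> k) (st k)
                     \<le> m_model f gf (B (x k)) \<psi> (x k) (\<sigma> k) (scp k)"
    and s_def: "\<And>k. s k = (if norm (st k) > \<theta>2 * norm (scp k) then scp k else st k)"
    and rho_def: "\<And>k. \<rho> k =
          (ereal (f (x k)) + h (x k) - (ereal (f (x k + s k)) + h (x k + s k))) /
          (ereal (phi_q f gf (B (x k)) (x k) 0) + \<psi> (x k) 0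
             - ereal (phi_q f gf (B (x k)) (x k) (s k)) - \<psi> (x k) (s k))"
    and x_upd: "\<And>k. x (Suc k) = (if \<rho> k \<ge> ereal \<eta>1 then x k + s k else x k)"
    and sigma_vs: "\<And>k. \<rho> k \<ge> ereal \<eta>2 \<Longrightarrow> \<gamma>3 * \<sigma> k \<le> \<sigma> (Suc k) \<and> \<sigma> (Suc k) \<le> \<sigma> k"
    and sigma_s: "\<And>k. ereal \<eta>1 \<le> \<rho> k \<Longrightarrow> \<rho> k < ereal \<eta>2 \<Longrightarrow>
                     \<sigma> k \<le> \<sigma> (Suc k) \<and> \<sigma> (Suc k) \<le> \<gamma>1 * \<sigma> k"
    and sigma_u: "\<And>k. \<rho> k < ereal \<eta>1 \<Longrightarrow>
                     \<gamma>1 * \<sigma> k \<le> \<sigma> (Suc k) \<and> \<sigma> (Suc k) \<le> \<gamma>2 * \<sigma> k"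
    (* finitely many successful iterations *)
    and fin_succ: "finite {k. \<rho> k \<ge> ereal \<eta>1}"
  shows "(\<exists>xstar. \<forall>\<^sub>F k in sequentially. x k = xstar) \<and>
         Liminf sequentially
           (\<lambda>k. ereal (sqrt (1 / \<nu> k)) * esqrt (xi_cp f gf h \<psi> (x k) (scp k))) = 0"
proof -
  interpret r2n_iteration f gf h \<psi> B \<theta>1 \<theta>2 \<eta>1 \<eta>2 \<gamma>1 \<gamma>3 x \<sigma> \<nu> scp st s \<rho> \<omega>
    using f_grad h_proper MA1 MA3_lim MA3 params init nu_def scp_def st_def s_def rho_def x_upd
      sigma_vs sigma_s sigma_u
    by unfold_locales (auto simp: proper_fun_def)
  obtain K where unsuccessful: "\<And>k. K \<le> k \<Longrightarrow> \<rho> k < ereal \<eta>1"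
  proof -
    obtain N where "\<forall>k\<in>{k. ereal \<eta>1 \<le> \<rho> k}. k < N"
      using fin_succ finite_nat_set_iff_bounded by blast
    then show ?thesis
      using that[of N] by (meson mem_Collect_eq not_le)
  qed
  show ?thesis
    using x_eq_x_K[OF unsuccessful] Liminf_criticality_measure_eq_0[OF unsuccessful]
    by (auto simp: eventually_sequentially)
qed

end
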